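(* Let $(G,u,v,\alpha,\beta)$ be a Guvab with $\beta=1$. Then either $\{W_{2k}\}$ is eventually constant, or there exist constants $c_e,\lambda_e$ such that $\left|W_{2k}-\lim_{k\to\infty}W_{2k}\right|\sim c_e\cdot\lambda_e^{2k}$. Also, either $\{W_{2k+1}\}$ is eventually constant, or there exist constants $c_o,\lambda_o$ such that $\left|W_{2k+1}-\lim_{k\to\infty}W_{2k+1}\right|\sim c_o\cdot\lambda_o^{2k+1}$.
   Context: A Guvab is a tuple $(G,u,v,\alpha,\beta)$ where $G$ is a finite, connected, simple graph, $u,v\in V(G)$, and $\alpha,\beta\in[0,1]$ with $\alpha\le\beta$. A random walk on $G$ with starting vertex $w$ and laziness $\gamma$ is the Markov chain $R_0=w$ and, for $i\ge1$, $R_i=R_{i-1}$ with probability $\gamma$ and $R_i=t$ with probability $\frac{1-\gamma}{\deg(R_{i-1})}$ for each neighbor $t$ of $R_{i-1}$. $\mu_k$ is the distribution after $k$ steps of the walk from $u$ with laziness $\alpha$, $\nu_k$ that of the walk from $v$ with laziness $\beta$, and $W_k=W(\mu_k,\nu_k)$ is the Wasserstein ($L^1$ optimal transport) distance with respect to the graph distance. A sequence $\{S_i\}$ is eventually constant if there is $N$ with $S_k=S_N$ for all $k\ge N$; $a_k\sim b_k$ means $a_k/b_k\to1$. The limits $\lim_k W_{2k}$ and $\lim_k W_{2k+1}$ exist. *)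

theory Defs
  imports "HOL-Analysis.Analysis" "HOL-Library.Landau_Symbols"
begin

definition simple_graph :: "'a set \<Rightarrow> ('a \<Rightarrow> 'a \<Rightarrow> bool) \<Rightarrow> bool" where
  "simple_graph V E \<longleftrightarrow> finite V \<and>
     (\<forall>x y. E x y \<longrightarrow> x \<in> V \<and> y \<in> V) \<and>
     (\<forall>x y. E x y \<longrightarrow> E y x) \<and> (\<forall>x. \<not> E x x)"

definition connected_graph :: "'a set \<Rightarrow> ('a \<Rightarrow> 'a \<Rightarrow> bool) \<Rightarrow> bool" where
  "connected_graph V E \<longleftrightarrow> (\<forall>x\<in>V. \<forall>y\<in>V. E\<^sup>*\<^sup>* x y)"

definition deg :: "'a set \<Rightarrow> ('a \<Rightarrow> 'a \<Rightarrow> bool) \<Rightarrow> 'a \<Rightarrow> nat" where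
  "deg V E s = card {t\<in>V. E s t}"

definition gdist :: "('a \<Rightarrow> 'a \<Rightarrow> bool) \<Rightarrow> 'a \<Rightarrow> 'a \<Rightarrow> nat" where
  "gdist E x y = (LEAST n. (E ^^ n) x y)"

definition walk_step :: "'a set \<Rightarrow> ('a \<Rightarrow> 'a \<Rightarrow> bool) \<Rightarrow> real \<Rightarrow> ('a \<Rightarrow> real) \<Rightarrow> ('a \<Rightarrow> real)" where
  "walk_step V E \<gamma> p = (\<lambda>t. \<gamma> * p t +
      (\<Sum>s\<in>V. if E s t then (1 - \<gamma>) / real (deg V E s) * p s else 0))"

definition walk_dist :: "'a set \<Rightarrow> ('a \<Rightarrow> 'a \<Rightarrow> bool) \<Rightarrow> real \<Rightarrow> 'a \<Rightarrow> nat \<Rightarrow> ('a \<Rightarrow> real)" where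
  "walk_dist V E \<gamma> w k = (walk_step V E \<gamma> ^^ k) (\<lambda>t. if t = w then 1 else 0)"

definition coupling :: "'a set \<Rightarrow> ('a \<Rightarrow> real) \<Rightarrow> ('a \<Rightarrow> real) \<Rightarrow> ('a \<Rightarrow> 'a \<Rightarrow> real) \<Rightarrow> bool" where
  "coupling V \<mu> \<nu> \<pi> \<longleftrightarrow> (\<forall>x\<in>V. \<forall>y\<in>V. \<pi> x y \<ge> 0) \<and>
     (\<forall>x\<in>V. (\<Sum>y\<in>V. \<pi> x y) = \<mu> x) \<and> (\<forall>y\<in>V. (\<Sum>x\<in>V. \<pi> x y) = \<nu> y)"

definition wasserstein :: "'a set \<Rightarrow> ('a \<Rightarrow> 'a \<Rightarrow> bool) \<Rightarrow> ('a \<Rightarrow> real) \<Rightarrow> ('a \<Rightarrow> real) \<Rightarrow> real" where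
  "wasserstein V E \<mu> \<nu> = Inf {(\<Sum>x\<in>V. \<Sum>y\<in>V. \<pi> x y * real (gdist E x y)) | \<pi>. coupling V \<mu> \<nu> \<pi>}"

definition W :: "'a set \<Rightarrow> ('a \<Rightarrow> 'a \<Rightarrow> bool) \<Rightarrow> 'a \<Rightarrow> 'a \<Rightarrow> real \<Rightarrow> real \<Rightarrow> nat \<Rightarrow> real" where
  "W V E u v \<alpha> \<beta> k = wasserstein V E (walk_dist V E \<alpha> u k) (walk_dist V E \<beta> v k)"

definition eventually_const :: "(nat \<Rightarrow> real) \<Rightarrow> bool" where
  "eventually_const S \<longleftrightarrow> (\<exists>N. \<forall>k\<ge>N. S k = S N)"

end

theory Submission
  imports Defs "HOL-Computational_Algebra.Fundamental_Theorem_Algebra"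
begin

text \<open>For \<open>\<beta> = 1\<close> the second walk never moves, so \<open>W\<^sub>k = \<Sum>\<^sub>x \<mu>\<^sub>k(x) d(x, v)\<close> is a linear
  functional of \<open>\<mu>\<^sub>k = P\<^sup>k \<delta>\<^sub>u\<close>. The transition operator P is self-adjoint for the weights
  \<open>1 / deg\<close>, hence diagonalisable with real eigenvalues, which lie in [-1, 1] because P is
  stochastic; so \<open>W\<^sub>k = \<Sum>\<^sub>\<mu> c\<^sub>\<mu> \<mu>\<^sup>k\<close>. Along even or odd k this is a sum of powers of the
  squares \<open>\<mu>\<^sup>2 \<in> [0, 1]\<close>: the base 1 gives the limit, the base 0 drops out, and the largest
  remaining base dominates the error. Diagonalisability is shown by hand: the Krylov vectors of
  \<open>\<delta>\<^sub>u\<close> are linearly dependent, the resulting annihilating polynomial splits over \<complex>, and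
  self-adjointness excludes Jordan chains. If some vertex has degree 0, connectedness leaves a
  single vertex and W is constant from k = 1 on.\<close>

section \<open>Operators given by real kernels on a finite set\<close>

definition kernel_op :: "'a set \<Rightarrow> ('a \<Rightarrow> 'a \<Rightarrow> real) \<Rightarrow> ('a \<Rightarrow> complex) \<Rightarrow> 'a \<Rightarrow> complex" where
  "kernel_op X K z = (\<lambda>x. \<Sum>y\<in>X. complex_of_real (K x y) * z y)"

definition kernel_poly_op :: "'a set \<Rightarrow> ('a \<Rightarrow> 'a \<Rightarrow> real) \<Rightarrow> complex poly \<Rightarrow> ('a \<Rightarrow> complex) \<Rightarrow> 'a \<Rightarrow> complex" where
  "kernel_poly_op X K p z = (\<lambda>x. \<Sum>j\<le>degree p. coeff p j * (kernel_op X K ^^ j) z x)"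

lemma kernel_op_cong: "(\<And>y. y \<in> X \<Longrightarrow> u y = v y) \<Longrightarrow> kernel_op X K u x = kernel_op X K v x"
  unfolding kernel_op_def by (auto intro!: sum.cong)

lemma kernel_op_zero [simp]: "kernel_op X K (\<lambda>_. 0) x = 0"
  unfolding kernel_op_def by simp

lemma kernel_op_sum: "kernel_op X K (\<lambda>x. \<Sum>i\<in>I. f i x) x = (\<Sum>i\<in>I. kernel_op X K (f i) x)"
  unfolding kernel_op_def by (simp add: sum_distrib_left) (rule sum.swap)

lemma kernel_op_add: "kernel_op X K (\<lambda>x. u x + v x) x = kernel_op X K u x + kernel_op X K v x"
  unfolding kernel_op_def by (simp add: sum.distrib algebra_simps)

lemma kernel_op_diff: "kernel_op X K (\<lambda>x. u x - v x) x = kernel_op X K u x - kernel_op X K v x"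
  unfolding kernel_op_def by (simp add: sum_subtractf algebra_simps)

lemma kernel_op_mult: "kernel_op X K (\<lambda>x. c * u x) x = c * kernel_op X K u x"
  unfolding kernel_op_def by (simp add: sum_distrib_left mult_ac)

lemma kernel_op_divide: "kernel_op X K (\<lambda>x. u x / c) x = kernel_op X K u x / c"
  unfolding kernel_op_def by (simp add: sum_divide_distrib)

lemma kernel_poly_op_degree_le:
  assumes "degree p \<le> N"
  shows "kernel_poly_op X K p z x = (\<Sum>j\<le>N. coeff p j * (kernel_op X K ^^ j) z x)"
  unfolding kernel_poly_op_def
  by (rule sum.mono_neutral_left) (use assms in \<open>auto simp: coeff_eq_0\<close>)

lemma kernel_poly_op_0 [simp]: "kernel_poly_op X K 0 z x = 0"
  by (simp add: kernel_poly_op_def)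

lemma kernel_poly_op_1 [simp]: "kernel_poly_op X K 1 z x = z x"
  by (simp add: kernel_poly_op_def)

lemma kernel_poly_op_pCons:
  "kernel_poly_op X K (pCons a p) z x = a * z x + kernel_op X K (kernel_poly_op X K p z) x"
proof -
  have "kernel_poly_op X K (pCons a p) z x
      = (\<Sum>j\<le>Suc (degree p). coeff (pCons a p) j * (kernel_op X K ^^ j) z x)"
    by (rule kernel_poly_op_degree_le) (simp add: degree_pCons_le)
  also have "\<dots> = a * z x + (\<Sum>j\<le>degree p. coeff p j * (kernel_op X K ^^ Suc j) z x)"
    by (subst sum.atMost_Suc_shift) simp
  also have "(\<Sum>j\<le>degree p. coeff p j * (kernel_op X K ^^ Suc j) z x)
      = kernel_op X K (kernel_poly_op X K p z) x"
    unfolding kernel_poly_op_def kernel_op_def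
    by (simp add: sum_distrib_left sum_distrib_right mult_ac sum.swap[of _ X])
  finally show ?thesis .
qed

lemma kernel_poly_op_linear_factor:
  "kernel_poly_op X K [:-a, 1:] z x = kernel_op X K z x - a * z x"
  by (simp add: kernel_poly_op_pCons kernel_op_def)

lemma kernel_poly_op_add:
  "kernel_poly_op X K (p + q) z x = kernel_poly_op X K p z x + kernel_poly_op X K q z x"
proof -
  let ?N = "max (degree p) (degree q)"
  have "kernel_poly_op X K (p + q) z x = (\<Sum>j\<le>?N. coeff (p + q) j * (kernel_op X K ^^ j) z x)"
    by (rule kernel_poly_op_degree_le) (simp add: degree_add_le)
  then show ?thesis
    by (simp add: kernel_poly_op_degree_le[of p ?N] kernel_poly_op_degree_le[of q ?N]
        sum.distrib distrib_right)
qed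

lemma kernel_poly_op_smult: "kernel_poly_op X K (smult c p) z x = c * kernel_poly_op X K p z x"
proof -
  have "kernel_poly_op X K (smult c p) z x = (\<Sum>j\<le>degree p. coeff (smult c p) j * (kernel_op X K ^^ j) z x)"
    by (rule kernel_poly_op_degree_le) simp
  then show ?thesis by (simp add: kernel_poly_op_def sum_distrib_left mult_ac)
qed

lemma kernel_poly_op_mult:
  "kernel_poly_op X K (p * q) z x = kernel_poly_op X K p (kernel_poly_op X K q z) x"
proof (induction p arbitrary: x rule: pCons_induct)
  case (pCons a p)
  have "kernel_poly_op X K (pCons a p * q) z x
      = a * kernel_poly_op X K q z x + kernel_op X K (kernel_poly_op X K (p * q) z) x"
    by (simp add: kernel_poly_op_add kernel_poly_op_smult kernel_poly_op_pCons)
  also have "kernel_op X K (kernel_poly_op X K (p * q) z) x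
      = kernel_op X K (kernel_poly_op X K p (kernel_poly_op X K q z)) x"
    using pCons.IH by (intro kernel_op_cong) auto
  finally show ?case by (simp add: kernel_poly_op_pCons)
qed simp

lemma nontrivial_vanishing_combination:
  fixes v :: "'j \<Rightarrow> 'a \<Rightarrow> 'b::field"
  assumes "finite X" "finite J" "card X < card J"
  shows "\<exists>c. (\<exists>j\<in>J. c j \<noteq> 0) \<and> (\<forall>x\<in>X. (\<Sum>j\<in>J. c j * v j x) = 0)"
  using assms
proof (induction X arbitrary: J v rule: finite_induct)
  case empty
  then have "J \<noteq> {}" by auto
  then show ?case by (intro exI[of _ "\<lambda>_. 1"]) auto
next
  case (insert x X)
  show ?case
  proof (cases "\<forall>j\<in>J. v j x = 0")
    case True
    from insert.IH[of J v] insert.prems insert.hyps obtain c where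
      c: "\<exists>j\<in>J. c j \<noteq> 0" "\<forall>y\<in>X. (\<Sum>j\<in>J. c j * v j y) = 0" by auto
    with True show ?thesis by (intro exI[of _ c]) auto
  next
    case False
    then obtain j0 where j0: "j0 \<in> J" "v j0 x \<noteq> 0" by auto
    define J' where "J' = J - {j0}"
    \<comment> \<open>Gaussian elimination of the coordinate x by the pivot j0.\<close>
    define w where "w = (\<lambda>j y. v j y - (v j x / v j0 x) * v j0 y)"
    have "card X < card J'"
      using insert.prems insert.hyps j0 unfolding J'_def by (simp add: card_Diff_singleton)
    with insert.IH[of J' w] insert.prems obtain d where
      d: "\<exists>j\<in>J'. d j \<noteq> 0" "\<forall>y\<in>X. (\<Sum>j\<in>J'. d j * w j y) = 0"
      unfolding J'_def by auto
    define S where "S = (\<Sum>j\<in>J'. d j * v j x)"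
    define c where "c = (\<lambda>j. if j = j0 then - S / v j0 x else d j)"
    have split: "(\<Sum>j\<in>J. c j * v j y) = c j0 * v j0 y + (\<Sum>j\<in>J'. d j * v j y)" for y
    proof -
      have "(\<Sum>j\<in>J. c j * v j y) = c j0 * v j0 y + (\<Sum>j\<in>J'. c j * v j y)"
        unfolding J'_def using j0 insert.prems by (simp add: sum.remove)
      also have "(\<Sum>j\<in>J'. c j * v j y) = (\<Sum>j\<in>J'. d j * v j y)"
        unfolding J'_def c_def by (intro sum.cong) auto
      finally show ?thesis .
    qed
    have "(\<Sum>j\<in>J. c j * v j y) = 0" if y: "y \<in> insert x X" for y
    proof (cases "y = x")
      case True
      then show ?thesis using j0 unfolding split by (simp add: c_def S_def)
    next
      case False
      with y have "y \<in> X" by auto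
      moreover have "(\<Sum>j\<in>J'. d j * w j y) = (\<Sum>j\<in>J'. d j * v j y) - S / v j0 x * v j0 y"
        unfolding w_def S_def
        by (simp add: algebra_simps sum_subtractf sum_distrib_left sum_divide_distrib sum_distrib_right)
      ultimately show ?thesis using d(2) unfolding split by (simp add: c_def)
    qed
    moreover have "\<exists>j\<in>J. c j \<noteq> 0" using d(1) unfolding c_def J'_def by auto
    ultimately show ?thesis by blast
  qed
qed

lemma kernel_annihilated_by_linear_factors:
  assumes "finite X"
  shows "\<exists>A. \<forall>x\<in>X. kernel_poly_op X K (\<Prod>a\<in>#A. [:-a, 1:]) z x = 0"
proof -
  define n where "n = card X"
  obtain c where c: "\<exists>j\<in>{..n}. c j \<noteq> 0" "\<forall>x\<in>X. (\<Sum>j\<le>n. c j * (kernel_op X K ^^ j) z x) = 0"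
    using nontrivial_vanishing_combination[OF assms, of "{..n}" "\<lambda>j. (kernel_op X K ^^ j) z"]
    unfolding n_def by auto
  define p where "p = (\<Sum>j\<le>n. monom (c j) j)"
  have coeff_p: "coeff p j = (if j \<le> n then c j else 0)" for j
    unfolding p_def by (simp add: coeff_sum coeff_monom)
  have "degree p \<le> n" by (rule degree_le) (simp add: coeff_p)
  then have p_annihilates: "kernel_poly_op X K p z x = 0" if "x \<in> X" for x
    using c(2) that by (simp add: kernel_poly_op_degree_le coeff_p)
  have "p \<noteq> 0" using c(1) coeff_p by (metis atMost_iff coeff_0)
  moreover have "p = smult (lead_coeff p) (\<Prod>a\<in>#proots p. [:-a, 1:])"
    by (rule complex_poly_decompose_multiset[symmetric])
  ultimately have "\<forall>x\<in>X. kernel_poly_op X K (\<Prod>a\<in>#proots p. [:-a, 1:]) z x = 0"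
    using p_annihilates kernel_poly_op_smult[of X K "lead_coeff p"] by (metis leading_coeff_0_iff mult_eq_0_iff)
  then show ?thesis ..
qed

section \<open>Reversible kernels are diagonalisable\<close>

definition weighted_inner :: "'a set \<Rightarrow> ('a \<Rightarrow> real) \<Rightarrow> ('a \<Rightarrow> complex) \<Rightarrow> ('a \<Rightarrow> complex) \<Rightarrow> complex" where
  "weighted_inner X w u v = (\<Sum>x\<in>X. complex_of_real (w x) * u x * cnj (v x))"

definition reversible_kernel :: "'a set \<Rightarrow> ('a \<Rightarrow> real) \<Rightarrow> ('a \<Rightarrow> 'a \<Rightarrow> real) \<Rightarrow> bool" where
  "reversible_kernel X w K \<longleftrightarrow> finite X \<and> (\<forall>x\<in>X. w x > 0) \<and> (\<forall>x\<in>X. \<forall>y\<in>X. w x * K x y = w y * K y x)"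

lemma weighted_inner_cong:
  "(\<And>x. x \<in> X \<Longrightarrow> u x = u' x) \<Longrightarrow> (\<And>x. x \<in> X \<Longrightarrow> v x = v' x) \<Longrightarrow>
    weighted_inner X w u v = weighted_inner X w u' v'"
  unfolding weighted_inner_def by (auto intro!: sum.cong)

lemma weighted_inner_diff_left:
  "weighted_inner X w (\<lambda>x. u x - v x) z = weighted_inner X w u z - weighted_inner X w v z"
  unfolding weighted_inner_def by (simp add: sum_subtractf algebra_simps)

lemma weighted_inner_mult_left: "weighted_inner X w (\<lambda>x. c * u x) v = c * weighted_inner X w u v"
  unfolding weighted_inner_def by (simp add: sum_distrib_left algebra_simps)

lemma weighted_inner_mult_right: "weighted_inner X w u (\<lambda>x. c * v x) = cnj c * weighted_inner X w u v"
  unfolding weighted_inner_def by (simp add: sum_distrib_left algebra_simps)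

lemma kernel_op_self_adjoint:
  assumes "reversible_kernel X w K"
  shows "weighted_inner X w (kernel_op X K u) v = weighted_inner X w u (kernel_op X K v)"
proof -
  have rev: "w x * K x y = w y * K y x" if "x \<in> X" "y \<in> X" for x y
    using assms that unfolding reversible_kernel_def by auto
  have "weighted_inner X w u (kernel_op X K v)
      = (\<Sum>x\<in>X. \<Sum>y\<in>X. complex_of_real (w x * K x y) * u x * cnj (v y))"
    by (simp add: weighted_inner_def kernel_op_def cnj_sum sum_distrib_left sum_distrib_right mult_ac)
  also have "\<dots> = (\<Sum>y\<in>X. \<Sum>x\<in>X. complex_of_real (w y * K y x) * u x * cnj (v y))"
    by (subst sum.swap) (intro sum.cong refl, simp add: rev)
  also have "\<dots> = weighted_inner X w (kernel_op X K u) v"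
    by (simp add: weighted_inner_def kernel_op_def sum_distrib_left sum_distrib_right mult_ac)
  finally show ?thesis ..
qed

lemma weighted_inner_self_eq_0D:
  assumes fin: "finite X" and pos: "\<forall>x\<in>X. w x > 0"
    and "weighted_inner X w u u = 0" "x \<in> X"
  shows "u x = 0"
proof -
  have "complex_of_real (w x) * u x * cnj (u x) = complex_of_real (w x * (cmod (u x))\<^sup>2)" for x
    by (simp only: of_real_mult complex_norm_square mult.assoc)
  then have "weighted_inner X w u u = complex_of_real (\<Sum>x\<in>X. w x * (cmod (u x))\<^sup>2)"
    unfolding weighted_inner_def of_real_sum by (intro sum.cong refl)
  then have "(\<Sum>x\<in>X. w x * (cmod (u x))\<^sup>2) = 0"
    using assms(3) of_real_eq_0_iff by metis
  with fin pos have "w x * (cmod (u x))\<^sup>2 = 0"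
    using sum_nonneg_eq_0_iff[of X "\<lambda>x. w x * (cmod (u x))\<^sup>2"] assms(4) by (simp add: less_imp_le)
  with pos assms(4) show ?thesis by fastforce
qed

lemma reversible_kernel_eigenvalue_real:
  assumes "reversible_kernel X w K" and eig: "\<And>x. x \<in> X \<Longrightarrow> kernel_op X K r x = a * r x"
    and "x0 \<in> X" "r x0 \<noteq> 0"
  shows "Im a = 0"
proof -
  have "a * weighted_inner X w r r = weighted_inner X w (kernel_op X K r) r"
    using eig by (simp add: weighted_inner_cong[of X "kernel_op X K r" "\<lambda>x. a * r x"] weighted_inner_mult_left)
  also have "\<dots> = weighted_inner X w r (kernel_op X K r)"
    by (rule kernel_op_self_adjoint[OF assms(1)])
  also have "\<dots> = cnj a * weighted_inner X w r r"
    using eig by (simp add: weighted_inner_cong[of X r r "kernel_op X K r" "\<lambda>x. a * r x"] weighted_inner_mult_right)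
  finally have "a * weighted_inner X w r r = cnj a * weighted_inner X w r r" .
  moreover have "weighted_inner X w r r \<noteq> 0"
    using weighted_inner_self_eq_0D[of X w r] assms(1,3,4) unfolding reversible_kernel_def by blast
  ultimately have "cnj a = a" by (metis mult_cancel_right)
  then show ?thesis by (simp add: complex_eq_iff)
qed

text \<open>Self-adjointness rules out Jordan chains: once a is known to be real,
  \<open>\<langle>r, r\<rangle> = \<langle>(K - a) g, r\<rangle> = \<langle>g, (K - a) r\<rangle> = 0\<close>.\<close>
lemma reversible_kernel_no_jordan_chain:
  assumes rev: "reversible_kernel X w K"
    and eig: "\<And>x. x \<in> X \<Longrightarrow> kernel_op X K r x = a * r x"
    and chain: "\<And>x. x \<in> X \<Longrightarrow> kernel_op X K g x - a * g x = r x"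
    and "x \<in> X"
  shows "r x = 0"
proof (rule ccontr)
  assume "r x \<noteq> 0"
  then have a_real: "cnj a = a"
    using reversible_kernel_eigenvalue_real[OF rev eig \<open>x \<in> X\<close>] by (simp add: complex_eq_iff)
  have "weighted_inner X w r r = weighted_inner X w (\<lambda>x. kernel_op X K g x - a * g x) r"
    using chain by (intro weighted_inner_cong) auto
  also have "\<dots> = weighted_inner X w g (kernel_op X K r) - a * weighted_inner X w g r"
    by (simp add: weighted_inner_diff_left weighted_inner_mult_left kernel_op_self_adjoint[OF rev])
  also have "weighted_inner X w g (kernel_op X K r) = cnj a * weighted_inner X w g r"
    using eig by (simp add: weighted_inner_cong[of X g g "kernel_op X K r" "\<lambda>x. a * r x"] weighted_inner_mult_right)
  finally have "weighted_inner X w r r = 0" using a_real by simp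
  with weighted_inner_self_eq_0D[of X w r] rev \<open>x \<in> X\<close> \<open>r x \<noteq> 0\<close> show False
    unfolding reversible_kernel_def by blast
qed

definition eigen_decomposable :: "'a set \<Rightarrow> ('a \<Rightarrow> 'a \<Rightarrow> real) \<Rightarrow> ('a \<Rightarrow> complex) \<Rightarrow> bool" where
  "eigen_decomposable X K y \<longleftrightarrow> (\<exists>M e. finite M \<and>
      (\<forall>\<mu>\<in>M. \<forall>x\<in>X. kernel_op X K (e \<mu>) x = complex_of_real \<mu> * e \<mu> x) \<and>
      (\<forall>x\<in>X. y x = (\<Sum>\<mu>\<in>M. e \<mu> x)))"

lemma eigen_decomposable_zero: "(\<And>x. x \<in> X \<Longrightarrow> y x = 0) \<Longrightarrow> eigen_decomposable X K y"
  unfolding eigen_decomposable_def by (intro exI[of _ "{}"]) auto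

lemma eigen_decomposable_add_eigenvector:
  assumes "eigen_decomposable X K h"
    and g: "\<And>x. x \<in> X \<Longrightarrow> kernel_op X K g x = complex_of_real b * g x"
    and y: "\<And>x. x \<in> X \<Longrightarrow> y x = g x + h x"
  shows "eigen_decomposable X K y"
proof -
  obtain M e where M: "finite M"
    and eig: "\<And>\<mu> x. \<mu> \<in> M \<Longrightarrow> x \<in> X \<Longrightarrow> kernel_op X K (e \<mu>) x = complex_of_real \<mu> * e \<mu> x"
    and h: "\<And>x. x \<in> X \<Longrightarrow> h x = (\<Sum>\<mu>\<in>M. e \<mu> x)"
    using assms(1) unfolding eigen_decomposable_def by blast
  define e' where "e' = (\<lambda>\<mu> x. (if \<mu> \<in> M then e \<mu> x else 0) + (if \<mu> = b then g x else 0))"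
  have "kernel_op X K (e' \<mu>) x = complex_of_real \<mu> * e' \<mu> x" if "\<mu> \<in> insert b M" "x \<in> X" for \<mu> x
    using that eig g unfolding e'_def
    by (auto simp: kernel_op_add kernel_op_mult distrib_left)
  moreover have "y x = (\<Sum>\<mu>\<in>insert b M. e' \<mu> x)" if "x \<in> X" for x
  proof -
    have "(\<Sum>\<mu>\<in>insert b M. e' \<mu> x)
        = (\<Sum>\<mu>\<in>insert b M. if \<mu> \<in> M then e \<mu> x else 0) + (\<Sum>\<mu>\<in>insert b M. if \<mu> = b then g x else 0)"
      unfolding e'_def by (rule sum.distrib)
    also have "(\<Sum>\<mu>\<in>insert b M. if \<mu> \<in> M then e \<mu> x else 0) = h x"
      using M h[OF that] by (simp add: sum.If_cases Int_absorb1 subset_insertI)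
    also have "(\<Sum>\<mu>\<in>insert b M. if \<mu> = b then g x else 0) = g x"
      using M by simp
    finally show ?thesis using y[OF that] by (simp add: add.commute)
  qed
  ultimately show ?thesis
    unfolding eigen_decomposable_def using M by blast
qed

lemma eigen_decomposable_shift:
  assumes rev: "reversible_kernel X w K"
    and "eigen_decomposable X K (\<lambda>x. kernel_op X K y x - a * y x)"
  shows "eigen_decomposable X K y"
proof -
  obtain M e where M: "finite M"
    and eig: "\<And>\<mu> x. \<mu> \<in> M \<Longrightarrow> x \<in> X \<Longrightarrow> kernel_op X K (e \<mu>) x = complex_of_real \<mu> * e \<mu> x"
    and dec: "\<And>x. x \<in> X \<Longrightarrow> kernel_op X K y x - a * y x = (\<Sum>\<mu>\<in>M. e \<mu> x)"
    using assms(2) unfolding eigen_decomposable_def by blast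
  define M1 where "M1 = {\<mu>\<in>M. complex_of_real \<mu> \<noteq> a}"
  \<comment> \<open>Invert \<open>K - a\<close> on the eigenvectors whose eigenvalue differs from a.\<close>
  define e' where "e' = (\<lambda>\<mu> x. e \<mu> x / (complex_of_real \<mu> - a))"
  define g where "g = (\<lambda>x. y x - (\<Sum>\<mu>\<in>M1. e' \<mu> x))"
  define r where "r = (\<lambda>x. \<Sum>\<mu>\<in>M-M1. e \<mu> x)"
  have "finite M1" "M1 \<subseteq> M" using M unfolding M1_def by auto
  have eig': "kernel_op X K (e' \<mu>) x = complex_of_real \<mu> * e' \<mu> x" if "\<mu> \<in> M1" "x \<in> X" for \<mu> x
    using eig[of \<mu> x] that unfolding e'_def M1_def by (simp add: kernel_op_divide)
  have r_eig: "kernel_op X K r x = a * r x" if "x \<in> X" for x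
    using eig that unfolding r_def M1_def by (simp add: kernel_op_sum sum_distrib_left)
  have g_chain: "kernel_op X K g x - a * g x = r x" if "x \<in> X" for x
  proof -
    have "kernel_op X K g x - a * g x
        = (kernel_op X K y x - a * y x) - (\<Sum>\<mu>\<in>M1. (complex_of_real \<mu> - a) * e' \<mu> x)"
      using eig' that unfolding g_def
      by (simp add: kernel_op_diff kernel_op_sum algebra_simps sum_subtractf sum_distrib_left)
    also have "\<dots> = (\<Sum>\<mu>\<in>M. e \<mu> x) - (\<Sum>\<mu>\<in>M1. e \<mu> x)"
      using dec that unfolding e'_def M1_def by simp
    also have "\<dots> = r x"
      unfolding r_def using sum.subset_diff[OF \<open>M1 \<subseteq> M\<close> M, of "\<lambda>\<mu>. e \<mu> x"] by simp
    finally show ?thesis .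
  qed
  have g_eig: "kernel_op X K g x = a * g x" if "x \<in> X" for x
    using g_chain[OF that] reversible_kernel_no_jordan_chain[OF rev r_eig g_chain that] by simp
  obtain b where b: "\<And>x. x \<in> X \<Longrightarrow> kernel_op X K g x = complex_of_real b * g x"
  proof (cases "\<forall>x\<in>X. g x = 0")
    case True
    then show ?thesis by (intro that[of 0]) (simp add: kernel_op_def)
  next
    case False
    then obtain x1 where "x1 \<in> X" "g x1 \<noteq> 0" by auto
    then show ?thesis
      using reversible_kernel_eigenvalue_real[OF rev g_eig] g_eig
      by (intro that[of "Re a"]) (simp add: complex_eq_iff)
  qed
  have "eigen_decomposable X K (\<lambda>x. \<Sum>\<mu>\<in>M1. e' \<mu> x)"
    unfolding eigen_decomposable_def using \<open>finite M1\<close> eig' by blast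
  from eigen_decomposable_add_eigenvector[OF this b] show ?thesis
    unfolding g_def by simp
qed

lemma eigen_decomposable_if_annihilated:
  assumes rev: "reversible_kernel X w K"
  shows "(\<forall>x\<in>X. kernel_poly_op X K (\<Prod>a\<in>#A. [:-a, 1:]) y x = 0) \<Longrightarrow> eigen_decomposable X K y"
proof (induction A arbitrary: y)
  case empty
  then show ?case by (intro eigen_decomposable_zero) simp
next
  case (add a A)
  have factor: "(\<Prod>a\<in>#add_mset a A. [:-a, 1:]) = (\<Prod>a\<in>#A. [:-a, 1:]) * [:-a, 1:]"
    by (simp only: image_mset_add_mset prod_mset.add_mset mult.commute)
  have "\<forall>x\<in>X. kernel_poly_op X K (\<Prod>a\<in>#A. [:-a, 1:]) (kernel_poly_op X K [:-a, 1:] y) x = 0"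
    using add.prems unfolding factor kernel_poly_op_mult .
  then have "eigen_decomposable X K (kernel_poly_op X K [:-a, 1:] y)"
    by (rule add.IH)
  then show ?case
    using eigen_decomposable_shift[OF rev, of y a] by (simp add: kernel_poly_op_linear_factor[abs_def])
qed

theorem reversible_kernel_eigen_decomposable:
  assumes "reversible_kernel X w K"
  shows "eigen_decomposable X K y"
proof -
  have "finite X" using assms unfolding reversible_kernel_def by blast
  from kernel_annihilated_by_linear_factors[OF this] obtain A
    where "\<forall>x\<in>X. kernel_poly_op X K (\<Prod>a\<in>#A. [:-a, 1:]) y x = 0" ..
  then show ?thesis by (rule eigen_decomposable_if_annihilated[OF assms])
qed

lemma stochastic_kernel_eigenvalue_bound:
  assumes fin: "finite X" and nonneg: "\<forall>x\<in>X. \<forall>y\<in>X. K x y \<ge> 0"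
    and col: "\<forall>y\<in>X. (\<Sum>x\<in>X. K x y) = 1"
    and eig: "\<forall>x\<in>X. kernel_op X K e x = complex_of_real \<mu> * e x"
    and "x0 \<in> X" "e x0 \<noteq> 0"
  shows "\<bar>\<mu>\<bar> \<le> 1"
proof -
  define T where "T = (\<Sum>x\<in>X. cmod (e x))"
  have "cmod (e x0) \<le> T" unfolding T_def using fin \<open>x0 \<in> X\<close> by (intro member_le_sum) auto
  moreover have "cmod (e x0) > 0" using \<open>e x0 \<noteq> 0\<close> by simp
  ultimately have "T > 0" by linarith
  have "\<bar>\<mu>\<bar> * T = (\<Sum>x\<in>X. cmod (kernel_op X K e x))"
    unfolding T_def sum_distrib_left using eig by (intro sum.cong) (auto simp: norm_mult)
  also have "\<dots> \<le> (\<Sum>x\<in>X. \<Sum>y\<in>X. K x y * cmod (e y))"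
    unfolding kernel_op_def using nonneg
    by (intro sum_mono order_trans[OF norm_sum]) (simp add: norm_mult)
  also have "\<dots> = (\<Sum>y\<in>X. (\<Sum>x\<in>X. K x y) * cmod (e y))"
    by (subst sum.swap) (simp add: sum_distrib_right)
  also have "\<dots> = T" unfolding T_def using col by simp
  finally show ?thesis using \<open>T > 0\<close> by (simp add: mult_le_cancel_right2)
qed

lemma kernel_op_iterate_of_real:
  fixes T :: "('a \<Rightarrow> real) \<Rightarrow> ('a \<Rightarrow> real)"
  assumes T: "\<And>p x. x \<in> X \<Longrightarrow> T p x = (\<Sum>y\<in>X. K x y * p y)" and "x \<in> X"
  shows "(kernel_op X K ^^ k) (\<lambda>x. complex_of_real (z x)) x = complex_of_real ((T ^^ k) z x)"
  using \<open>x \<in> X\<close>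
proof (induction k arbitrary: x)
  case (Suc k)
  have "(kernel_op X K ^^ Suc k) (\<lambda>x. complex_of_real (z x)) x
      = kernel_op X K (\<lambda>x. complex_of_real ((T ^^ k) z x)) x"
    using Suc.IH by (auto intro: kernel_op_cong)
  also have "\<dots> = complex_of_real (T ((T ^^ k) z) x)"
    unfolding kernel_op_def T[OF Suc.prems] by simp
  finally show ?case by simp
qed simp

lemma kernel_op_iterate_eigen_sum:
  assumes eig: "\<And>\<mu> x. \<mu> \<in> M \<Longrightarrow> x \<in> X \<Longrightarrow> kernel_op X K (e \<mu>) x = complex_of_real \<mu> * e \<mu> x"
    and y: "\<And>x. x \<in> X \<Longrightarrow> y x = (\<Sum>\<mu>\<in>M. e \<mu> x)" and "x \<in> X"
  shows "(kernel_op X K ^^ k) y x = (\<Sum>\<mu>\<in>M. complex_of_real \<mu> ^ k * e \<mu> x)"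
  using \<open>x \<in> X\<close>
proof (induction k arbitrary: x)
  case (Suc k)
  then have "(kernel_op X K ^^ Suc k) y x
      = kernel_op X K (\<lambda>x. \<Sum>\<mu>\<in>M. complex_of_real \<mu> ^ k * e \<mu> x) x"
    by (auto intro: kernel_op_cong)
  also have "\<dots> = (\<Sum>\<mu>\<in>M. complex_of_real \<mu> ^ Suc k * e \<mu> x)"
    using eig Suc.prems by (simp add: kernel_op_sum kernel_op_mult) (simp add: mult_ac)
  finally show ?case .
qed (simp add: y)

theorem reversible_stochastic_kernel_iterates_exp_sum:
  fixes K :: "'a \<Rightarrow> 'a \<Rightarrow> real" and T :: "('a \<Rightarrow> real) \<Rightarrow> ('a \<Rightarrow> real)" and f z :: "'a \<Rightarrow> real"
  assumes rev: "reversible_kernel X w K"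
    and nonneg: "\<forall>x\<in>X. \<forall>y\<in>X. K x y \<ge> 0"
    and col: "\<forall>y\<in>X. (\<Sum>x\<in>X. K x y) = 1"
    and T: "\<And>p x. x \<in> X \<Longrightarrow> T p x = (\<Sum>y\<in>X. K x y * p y)"
  shows "\<exists>M c. finite M \<and> (\<forall>\<mu>\<in>M. \<bar>\<mu>\<bar> \<le> 1) \<and>
           (\<forall>k. (\<Sum>x\<in>X. f x * (T ^^ k) z x) = (\<Sum>\<mu>\<in>M. c \<mu> * \<mu> ^ k))"
proof -
  have fin: "finite X" using rev unfolding reversible_kernel_def by auto
  define y where "y = (\<lambda>x. complex_of_real (z x))"
  obtain M e where M: "finite M"
    and eig: "\<And>\<mu> x. \<mu> \<in> M \<Longrightarrow> x \<in> X \<Longrightarrow> kernel_op X K (e \<mu>) x = complex_of_real \<mu> * e \<mu> x"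
    and dec: "\<And>x. x \<in> X \<Longrightarrow> y x = (\<Sum>\<mu>\<in>M. e \<mu> x)"
    using reversible_kernel_eigen_decomposable[OF rev, of y] unfolding eigen_decomposable_def by blast
  define M' where "M' = {\<mu>\<in>M. \<exists>x\<in>X. e \<mu> x \<noteq> 0}"
  define c where "c = (\<lambda>\<mu>. Re (\<Sum>x\<in>X. complex_of_real (f x) * e \<mu> x))"
  have "finite M'" using M unfolding M'_def by auto
  have "\<bar>\<mu>\<bar> \<le> 1" if "\<mu> \<in> M'" for \<mu>
    using that eig stochastic_kernel_eigenvalue_bound[OF fin nonneg col] unfolding M'_def by blast
  moreover have "(\<Sum>x\<in>X. f x * (T ^^ k) z x) = (\<Sum>\<mu>\<in>M'. c \<mu> * \<mu> ^ k)" for k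
  proof -
    have "(\<Sum>x\<in>X. f x * (T ^^ k) z x) = Re (\<Sum>x\<in>X. complex_of_real (f x) * (kernel_op X K ^^ k) y x)"
      by (simp add: Re_sum y_def kernel_op_iterate_of_real[OF T])
    also have "\<dots> = Re (\<Sum>\<mu>\<in>M. complex_of_real \<mu> ^ k * (\<Sum>x\<in>X. complex_of_real (f x) * e \<mu> x))"
      by (simp add: kernel_op_iterate_eigen_sum[OF eig dec] sum_distrib_left mult_ac sum.swap[of _ X])
    also have "\<dots> = (\<Sum>\<mu>\<in>M. c \<mu> * \<mu> ^ k)"
      unfolding c_def Re_sum by (intro sum.cong) (auto simp flip: of_real_power)
    also have "\<dots> = (\<Sum>\<mu>\<in>M'. c \<mu> * \<mu> ^ k)"
      using M unfolding M'_def c_def by (intro sum.mono_neutral_right) auto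
    finally show ?thesis .
  qed
  ultimately show ?thesis using \<open>finite M'\<close> by blast
qed

section \<open>Exponential sums\<close>

lemma exp_sum_asymp_equiv_dominant:
  fixes d :: "real \<Rightarrow> real"
  assumes "finite N" "\<nu>0 \<in> N" "0 < \<nu>0" "\<And>\<nu>. \<nu> \<in> N - {\<nu>0} \<Longrightarrow> \<bar>\<nu>\<bar> < \<nu>0" "d \<nu>0 \<noteq> 0"
  shows "(\<lambda>k. \<Sum>\<nu>\<in>N. d \<nu> * \<nu> ^ k) \<sim>[at_top] (\<lambda>k. d \<nu>0 * \<nu>0 ^ k)"
proof -
  have "(\<lambda>k. d \<nu> * \<nu> ^ k) \<in> o(\<lambda>k. d \<nu>0 * \<nu>0 ^ k)" if "\<nu> \<in> N - {\<nu>0}" for \<nu>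
  proof (rule smalloI_tendsto)
    have "\<bar>\<nu> / \<nu>0\<bar> < 1" using assms(3) assms(4)[OF that] by simp
    then have "(\<lambda>k. d \<nu> / d \<nu>0 * (\<nu> / \<nu>0) ^ k) \<longlonglongrightarrow> 0"
      by (intro tendsto_mult_right_zero LIMSEQ_power_zero) simp
    then show "((\<lambda>k. d \<nu> * \<nu> ^ k / (d \<nu>0 * \<nu>0 ^ k)) \<longlongrightarrow> 0) at_top"
      by (simp add: power_divide)
    show "\<forall>\<^sub>F k in at_top. d \<nu>0 * \<nu>0 ^ k \<noteq> 0" using assms(3,5) by simp
  qed
  then have "(\<lambda>k. \<Sum>\<nu>\<in>N - {\<nu>0}. d \<nu> * \<nu> ^ k) \<in> o(\<lambda>k. d \<nu>0 * \<nu>0 ^ k)"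
    by (rule big_sum_in_smallo)
  moreover have "(\<Sum>\<nu>\<in>N. d \<nu> * \<nu> ^ k) = d \<nu>0 * \<nu>0 ^ k + (\<Sum>\<nu>\<in>N - {\<nu>0}. d \<nu> * \<nu> ^ k)" for k
    using assms(1,2) by (rule sum.remove)
  ultimately show ?thesis by (simp add: asymp_equiv_add_right)
qed

lemma exp_sum_unit_interval_eq:
  fixes d :: "real \<Rightarrow> real"
  assumes "finite N" "N \<subseteq> {0..1}" "k \<ge> 1"
  shows "(\<Sum>\<nu>\<in>N. d \<nu> * \<nu> ^ k)
      = (if 1 \<in> N then d 1 else 0) + (\<Sum>\<nu>\<in>{\<nu>\<in>N. 0 < \<nu> \<and> \<nu> < 1 \<and> d \<nu> \<noteq> 0}. d \<nu> * \<nu> ^ k)"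
proof -
  define N' where "N' = {\<nu>\<in>N. 0 < \<nu> \<and> \<nu> < 1 \<and> d \<nu> \<noteq> 0}"
  have "N' \<union> (N \<inter> {1}) \<subseteq> N" unfolding N'_def by auto
  moreover have "d \<nu> * \<nu> ^ k = 0" if "\<nu> \<in> N - (N' \<union> N \<inter> {1})" for \<nu>
  proof -
    from that assms(2) have "\<nu> = 0 \<or> d \<nu> = 0" unfolding N'_def by force
    then show ?thesis using assms(3) by auto
  qed
  ultimately have "(\<Sum>\<nu>\<in>N. d \<nu> * \<nu> ^ k) = (\<Sum>\<nu>\<in>N' \<union> (N \<inter> {1}). d \<nu> * \<nu> ^ k)"
    using assms(1) by (intro sum.mono_neutral_right) auto
  also have "\<dots> = (\<Sum>\<nu>\<in>N \<inter> {1}. d \<nu> * \<nu> ^ k) + (\<Sum>\<nu>\<in>N'. d \<nu> * \<nu> ^ k)"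
    using assms(1) by (subst sum.union_disjoint) (auto simp: N'_def)
  finally show ?thesis unfolding N'_def by (cases "1 \<in> N") auto
qed

lemma exp_sum_unit_interval_asymp:
  fixes d :: "real \<Rightarrow> real" and b :: "nat \<Rightarrow> real"
  assumes "finite N" "N \<subseteq> {0..1}" and b: "\<And>k. b k = (\<Sum>\<nu>\<in>N. d \<nu> * \<nu> ^ k)"
  shows "eventually_const b \<or>
    (\<exists>C \<rho>. 0 < \<rho> \<and> \<rho> < 1 \<and> (\<lambda>k. \<bar>b k - lim b\<bar>) \<sim>[at_top] (\<lambda>k. C * \<rho> ^ k))"
proof -
  define L where "L = (if 1 \<in> N then d 1 else 0)"
  define N' where "N' = {\<nu>\<in>N. 0 < \<nu> \<and> \<nu> < 1 \<and> d \<nu> \<noteq> 0}"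
  have "finite N'" using assms(1) unfolding N'_def by auto
  have b_eq: "b k - L = (\<Sum>\<nu>\<in>N'. d \<nu> * \<nu> ^ k)" if "k \<ge> 1" for k
    using exp_sum_unit_interval_eq[OF assms(1,2) that] unfolding b L_def N'_def by simp
  then have b_ev: "\<forall>\<^sub>F k in at_top. b k - L = (\<Sum>\<nu>\<in>N'. d \<nu> * \<nu> ^ k)"
    by (auto simp: eventually_at_top_linorder)
  have "(\<lambda>k. \<Sum>\<nu>\<in>N'. d \<nu> * \<nu> ^ k) \<longlonglongrightarrow> 0"
    by (intro tendsto_null_sum tendsto_mult_right_zero LIMSEQ_power_zero) (auto simp: N'_def)
  then have "(\<lambda>k. b k - L) \<longlonglongrightarrow> 0" using b_ev by (simp add: tendsto_cong)
  then have "lim b = L" by (simp add: limI LIM_zero_cancel)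
  show ?thesis
  proof (cases "N' = {}")
    case True
    then have "eventually_const b"
      unfolding eventually_const_def using b_eq by (intro exI[of _ 1]) force
    then show ?thesis ..
  next
    case False
    define \<nu>0 where "\<nu>0 = Max N'"
    have "\<nu>0 \<in> N'" unfolding \<nu>0_def using False \<open>finite N'\<close> by simp
    then have \<nu>0: "0 < \<nu>0" "\<nu>0 < 1" "d \<nu>0 \<noteq> 0" unfolding N'_def by auto
    have "\<bar>\<nu>\<bar> < \<nu>0" if "\<nu> \<in> N' - {\<nu>0}" for \<nu>
      using that Max_ge[OF \<open>finite N'\<close>, of \<nu>] unfolding \<nu>0_def N'_def by auto
    with exp_sum_asymp_equiv_dominant[OF \<open>finite N'\<close> \<open>\<nu>0 \<in> N'\<close>] \<nu>0
    have "(\<lambda>k. \<bar>\<Sum>\<nu>\<in>N'. d \<nu> * \<nu> ^ k\<bar>) \<sim>[at_top] (\<lambda>k. \<bar>d \<nu>0 * \<nu>0 ^ k\<bar>)"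
      by (intro asymp_equiv_abs_real) auto
    then have "(\<lambda>k. \<bar>b k - lim b\<bar>) \<sim>[at_top] (\<lambda>k. \<bar>d \<nu>0\<bar> * \<nu>0 ^ k)"
      using b_ev \<open>lim b = L\<close> \<nu>0(1)
      by (elim asymp_equiv_transfer) (auto elim: eventually_mono simp: abs_mult)
    then show ?thesis using \<nu>0 by blast
  qed
qed

lemma exp_sum_squares_asymp:
  fixes c :: "real \<Rightarrow> real" and b :: "nat \<Rightarrow> real"
  assumes "finite M" "\<forall>\<mu>\<in>M. \<bar>\<mu>\<bar> \<le> 1" and b: "\<And>k. b k = (\<Sum>\<mu>\<in>M. c \<mu> * \<mu> ^ (2*k))"
  shows "eventually_const b \<or>
    (\<exists>C \<rho>. 0 < \<rho> \<and> (\<lambda>k. \<bar>b k - lim b\<bar>) \<sim>[at_top] (\<lambda>k. C * \<rho> ^ (2*k)))"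
proof -
  define N where "N = (\<lambda>\<mu>. \<mu>\<^sup>2) ` M"
  \<comment> \<open>\<open>\<mu>\<close> and \<open>-\<mu>\<close> share the base \<open>\<mu>\<^sup>2\<close>, so their coefficients are merged.\<close>
  define d where "d = (\<lambda>\<nu>. \<Sum>\<mu>\<in>{\<mu>\<in>M. \<mu>\<^sup>2 = \<nu>}. c \<mu>)"
  have "N \<subseteq> {0..1}"
    using assms(2) unfolding N_def by (auto simp: abs_square_le_1)
  moreover have "b k = (\<Sum>\<nu>\<in>N. d \<nu> * \<nu> ^ k)" for k
  proof -
    have "b k = (\<Sum>\<nu>\<in>N. \<Sum>\<mu>\<in>{\<mu>\<in>M. \<mu>\<^sup>2 = \<nu>}. c \<mu> * (\<mu>\<^sup>2) ^ k)"
      unfolding b N_def power_mult using assms(1) by (rule sum.image_gen)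
    then show ?thesis
      unfolding d_def sum_distrib_right by (auto intro!: sum.cong)
  qed
  ultimately have "eventually_const b \<or>
    (\<exists>C \<rho>. 0 < \<rho> \<and> \<rho> < 1 \<and> (\<lambda>k. \<bar>b k - lim b\<bar>) \<sim>[at_top] (\<lambda>k. C * \<rho> ^ k))"
    using assms(1) unfolding N_def by (intro exp_sum_unit_interval_asymp) auto
  then show ?thesis
  proof (elim disjE exE conjE)
    fix C \<rho> :: real
    assume "0 < \<rho>" and asymp: "(\<lambda>k. \<bar>b k - lim b\<bar>) \<sim>[at_top] (\<lambda>k. C * \<rho> ^ k)"
    have "(\<lambda>k. C * \<rho> ^ k) = (\<lambda>k. C * sqrt \<rho> ^ (2*k))"
      using \<open>0 < \<rho>\<close> by (simp add: power_mult)
    with asymp \<open>0 < \<rho>\<close> show ?thesis by (metis real_sqrt_gt_0_iff)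
  qed simp
qed

theorem exp_sum_parity_asymp:
  fixes c :: "real \<Rightarrow> real" and a :: "nat \<Rightarrow> real"
  assumes "finite M" "\<forall>\<mu>\<in>M. \<bar>\<mu>\<bar> \<le> 1" and a: "\<And>k. a k = (\<Sum>\<mu>\<in>M. c \<mu> * \<mu> ^ k)"
  shows "(eventually_const (\<lambda>k. a (2*k)) \<or>
          (\<exists>c_e l_e :: real. (\<lambda>k. \<bar>a (2*k) - lim (\<lambda>k. a (2*k))\<bar>) \<sim>[at_top] (\<lambda>k. c_e * l_e ^ (2*k))))
       \<and> (eventually_const (\<lambda>k. a (2*k+1)) \<or>
          (\<exists>c_o l_o :: real. (\<lambda>k. \<bar>a (2*k+1) - lim (\<lambda>k. a (2*k+1))\<bar>) \<sim>[at_top] (\<lambda>k. c_o * l_o ^ (2*k+1))))"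
proof
  show "eventually_const (\<lambda>k. a (2*k)) \<or>
          (\<exists>c_e l_e :: real. (\<lambda>k. \<bar>a (2*k) - lim (\<lambda>k. a (2*k))\<bar>) \<sim>[at_top] (\<lambda>k. c_e * l_e ^ (2*k)))"
    using exp_sum_squares_asymp[OF assms(1,2) a] by blast
next
  have "a (2*k+1) = (\<Sum>\<mu>\<in>M. (c \<mu> * \<mu>) * \<mu> ^ (2*k))" for k
    unfolding a by (simp add: mult_ac)
  from exp_sum_squares_asymp[OF assms(1,2) this]
  have "eventually_const (\<lambda>k. a (2*k+1)) \<or>
    (\<exists>C \<rho>. 0 < \<rho> \<and> (\<lambda>k. \<bar>a (2*k+1) - lim (\<lambda>k. a (2*k+1))\<bar>) \<sim>[at_top] (\<lambda>k. C * \<rho> ^ (2*k)))" .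
  then show "eventually_const (\<lambda>k. a (2*k+1)) \<or>
          (\<exists>c_o l_o :: real. (\<lambda>k. \<bar>a (2*k+1) - lim (\<lambda>k. a (2*k+1))\<bar>) \<sim>[at_top] (\<lambda>k. c_o * l_o ^ (2*k+1)))"
  proof (elim disjE exE conjE)
    fix C \<rho> :: real
    assume "0 < \<rho>"
      and asymp: "(\<lambda>k. \<bar>a (2*k+1) - lim (\<lambda>k. a (2*k+1))\<bar>) \<sim>[at_top] (\<lambda>k. C * \<rho> ^ (2*k))"
    have "(\<lambda>k. C * \<rho> ^ (2*k)) = (\<lambda>k. C / \<rho> * \<rho> ^ (2*k+1))"
    proof
      fix k :: nat
      have "\<rho> ^ (2*k+1) = \<rho> * \<rho> ^ (2*k)" by (simp only: Suc_eq_plus1[symmetric] power_Suc)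
      then show "C * \<rho> ^ (2*k) = C / \<rho> * \<rho> ^ (2*k+1)" using \<open>0 < \<rho>\<close> by simp
    qed
    with asymp show ?thesis by metis
  qed simp
qed

section \<open>The lazy random walk\<close>

text \<open>\<open>walk_kernel V E \<gamma> t s\<close> is the probability of a step from s to t, so distributions
  evolve by \<open>p \<mapsto> K p\<close> and the kernel is column-stochastic.\<close>
definition walk_kernel :: "'a set \<Rightarrow> ('a \<Rightarrow> 'a \<Rightarrow> bool) \<Rightarrow> real \<Rightarrow> 'a \<Rightarrow> 'a \<Rightarrow> real" where
  "walk_kernel V E \<gamma> t s = (if t = s then \<gamma> else 0) + (if E s t then (1 - \<gamma>) / real (deg V E s) else 0)"

lemma walk_step_eq_walk_kernel:
  assumes "simple_graph V E" "t \<in> V"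
  shows "walk_step V E \<gamma> p t = (\<Sum>s\<in>V. walk_kernel V E \<gamma> t s * p s)"
proof -
  have "finite V" "\<not> E t t" using assms(1) unfolding simple_graph_def by auto
  then have "(\<Sum>s\<in>V. walk_kernel V E \<gamma> t s * p s)
      = (\<Sum>s\<in>V. if t = s then \<gamma> * p s else 0)
        + (\<Sum>s\<in>V. if E s t then (1 - \<gamma>) / real (deg V E s) * p s else 0)"
    unfolding walk_kernel_def sum.distrib[symmetric] by (intro sum.cong) auto
  then show ?thesis
    using \<open>finite V\<close> assms(2) unfolding walk_step_def by simp
qed

lemma walk_kernel_nonneg: "0 \<le> \<gamma> \<Longrightarrow> \<gamma> \<le> 1 \<Longrightarrow> 0 \<le> walk_kernel V E \<gamma> t s"
  unfolding walk_kernel_def by auto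

lemma walk_kernel_column_sum:
  assumes "simple_graph V E" "s \<in> V" "deg V E s > 0"
  shows "(\<Sum>t\<in>V. walk_kernel V E \<gamma> t s) = 1"
proof -
  have "finite V" using assms(1) unfolding simple_graph_def by auto
  have "(\<Sum>t\<in>V. if E s t then (1 - \<gamma>) / real (deg V E s) else 0)
      = real (deg V E s) * ((1 - \<gamma>) / real (deg V E s))"
    using \<open>finite V\<close> by (simp add: sum.inter_filter[symmetric] deg_def)
  then show ?thesis
    using \<open>finite V\<close> assms(2,3) unfolding walk_kernel_def sum.distrib by simp
qed

lemma walk_kernel_reversible:
  assumes "simple_graph V E" "\<forall>x\<in>V. deg V E x > 0"
  shows "reversible_kernel V (\<lambda>t. 1 / real (deg V E t)) (walk_kernel V E \<gamma>)"
  using assms unfolding reversible_kernel_def simple_graph_def walk_kernel_def by auto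

lemma walk_dist_distribution:
  assumes "simple_graph V E" "\<forall>x\<in>V. deg V E x > 0" "w \<in> V" "0 \<le> \<gamma>" "\<gamma> \<le> 1"
  shows "(\<forall>t\<in>V. 0 \<le> walk_dist V E \<gamma> w k t) \<and> (\<Sum>t\<in>V. walk_dist V E \<gamma> w k t) = 1"
proof (induction k)
  case 0
  have "finite V" using assms(1) unfolding simple_graph_def by auto
  then show ?case using assms(3) by (simp add: walk_dist_def)
next
  case (Suc k)
  let ?p = "walk_dist V E \<gamma> w k"
  have step: "walk_dist V E \<gamma> w (Suc k) t = (\<Sum>s\<in>V. walk_kernel V E \<gamma> t s * ?p s)" if "t \<in> V" for t
    using walk_step_eq_walk_kernel[OF assms(1) that] by (simp add: walk_dist_def)
  have "(\<Sum>t\<in>V. \<Sum>s\<in>V. walk_kernel V E \<gamma> t s * ?p s) = (\<Sum>s\<in>V. (\<Sum>t\<in>V. walk_kernel V E \<gamma> t s) * ?p s)"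
    by (subst sum.swap) (simp add: sum_distrib_right)
  also have "\<dots> = (\<Sum>s\<in>V. ?p s)"
    using walk_kernel_column_sum[OF assms(1)] assms(2) by simp
  finally show ?case
    using Suc.IH step walk_kernel_nonneg[OF assms(4,5)] by (auto intro!: sum_nonneg mult_nonneg_nonneg)
qed

lemma walk_dist_laziness_1: "walk_dist V E 1 v k = (\<lambda>t. if t = v then 1 else 0)"
proof -
  have "walk_step V E 1 = id" by (rule ext)+ (simp add: walk_step_def sum.neutral)
  then show ?thesis by (simp add: walk_dist_def)
qed

lemma coupling_point_mass_cost:
  assumes "finite V" "v \<in> V" "coupling V \<mu> (\<lambda>t. if t = v then 1 else 0) \<pi>"
  shows "(\<Sum>x\<in>V. \<Sum>y\<in>V. \<pi> x y * real (gdist E x y)) = (\<Sum>x\<in>V. \<mu> x * real (gdist E x v))"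
proof -
  \<comment> \<open>A coupling with a point mass must send all the mass to v.\<close>
  have zero: "\<pi> x y = 0" if "x \<in> V" "y \<in> V" "y \<noteq> v" for x y
  proof -
    have "(\<Sum>x\<in>V. \<pi> x y) = 0" and "\<forall>x\<in>V. \<pi> x y \<ge> 0"
      using assms(3) that unfolding coupling_def by auto
    with assms(1) that(1) show ?thesis by (simp add: sum_nonneg_eq_0_iff)
  qed
  have "(\<Sum>y\<in>V. \<pi> x y * c y) = \<pi> x v * c v" if "x \<in> V" for x and c :: "'a \<Rightarrow> real"
    using zero[OF that] assms(1,2) by (subst sum.remove[OF assms(1,2)]) (auto intro!: sum.neutral)
  from this[of _ "\<lambda>y. real (gdist E _ y)"] this[of _ "\<lambda>_. 1"] assms(3)
  show ?thesis unfolding coupling_def by (auto intro!: sum.cong)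
qed

lemma wasserstein_point_mass:
  assumes "finite V" "v \<in> V" "\<forall>x\<in>V. 0 \<le> \<mu> x" "(\<Sum>x\<in>V. \<mu> x) = 1"
  shows "wasserstein V E \<mu> (\<lambda>t. if t = v then 1 else 0) = (\<Sum>x\<in>V. \<mu> x * real (gdist E x v))"
proof -
  let ?\<delta> = "\<lambda>t. if t = v then 1 else 0 :: real"
  define \<pi> where "\<pi> = (\<lambda>x y. if y = v then \<mu> x else 0)"
  have coupling: "coupling V \<mu> ?\<delta> \<pi>"
    unfolding coupling_def \<pi>_def using assms by auto
  note cost = coupling_point_mass_cost[OF assms(1,2), of \<mu> _ E]
  have "{\<Sum>x\<in>V. \<Sum>y\<in>V. \<pi> x y * real (gdist E x y) | \<pi>. coupling V \<mu> ?\<delta> \<pi>}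
      = {\<Sum>x\<in>V. \<mu> x * real (gdist E x v)}"
  proof (intro equalityI subsetI)
    fix a assume "a \<in> {\<Sum>x\<in>V. \<Sum>y\<in>V. \<pi> x y * real (gdist E x y) | \<pi>. coupling V \<mu> ?\<delta> \<pi>}"
    then show "a \<in> {\<Sum>x\<in>V. \<mu> x * real (gdist E x v)}" by (auto simp: cost)
  next
    fix a assume "a \<in> {\<Sum>x\<in>V. \<mu> x * real (gdist E x v)}"
    then show "a \<in> {\<Sum>x\<in>V. \<Sum>y\<in>V. \<pi> x y * real (gdist E x y) | \<pi>. coupling V \<mu> ?\<delta> \<pi>}"
      using coupling by (intro CollectI exI[of _ \<pi>] conjI) (simp_all add: cost)
  qed
  then show ?thesis unfolding wasserstein_def by simp
qed

lemma W_laziness_1_exp_sum: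
  assumes graph: "simple_graph V E" and pos: "\<forall>x\<in>V. deg V E x > 0"
    and "u \<in> V" "v \<in> V" "0 \<le> \<alpha>" "\<alpha> \<le> 1"
  shows "\<exists>M c. finite M \<and> (\<forall>\<mu>\<in>M. \<bar>\<mu>\<bar> \<le> 1) \<and> (\<forall>k. W V E u v \<alpha> 1 k = (\<Sum>\<mu>\<in>M. c \<mu> * \<mu> ^ k))"
proof -
  have "finite V" using graph unfolding simple_graph_def by auto
  have "W V E u v \<alpha> 1 k
      = (\<Sum>x\<in>V. real (gdist E x v) * (walk_step V E \<alpha> ^^ k) (\<lambda>t. if t = u then 1 else 0) x)" for k
    using wasserstein_point_mass[OF \<open>finite V\<close> \<open>v \<in> V\<close>] walk_dist_distribution[OF graph pos \<open>u \<in> V\<close> assms(5,6)]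
    unfolding W_def walk_dist_laziness_1 by (simp add: walk_dist_def mult.commute)
  moreover have "\<exists>M c. finite M \<and> (\<forall>\<mu>\<in>M. \<bar>\<mu>\<bar> \<le> 1) \<and>
      (\<forall>k. (\<Sum>x\<in>V. real (gdist E x v) * (walk_step V E \<alpha> ^^ k) (\<lambda>t. if t = u then 1 else 0) x)
        = (\<Sum>\<mu>\<in>M. c \<mu> * \<mu> ^ k))"
    using walk_kernel_reversible[OF graph pos] walk_kernel_nonneg[OF assms(5,6)]
      walk_kernel_column_sum[OF graph] pos walk_step_eq_walk_kernel[OF graph]
    by (intro reversible_stochastic_kernel_iterates_exp_sum) auto
  ultimately show ?thesis by simp
qed

lemma connected_graph_isolated_vertex:
  assumes "simple_graph V E" "connected_graph V E" "x \<in> V" "deg V E x = 0"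
  shows "V = {x}"
proof -
  have "finite V" and edge: "\<And>y z. E y z \<Longrightarrow> y \<in> V \<and> z \<in> V"
    using assms(1) unfolding simple_graph_def by auto
  then have "{y\<in>V. E x y} = {}"
    using assms(4) unfolding deg_def by simp
  then have "\<not> E x y" for y
    using edge by blast
  moreover have "E\<^sup>*\<^sup>* x y" if "y \<in> V" for y
    using assms(2,3) that unfolding connected_graph_def by blast
  ultimately have "y = x" if "y \<in> V" for y
    using that by (metis converse_rtranclpE)
  with assms(3) show ?thesis by blast
qed

text \<open>Without neighbours the lazy walk keeps only the fraction \<alpha> of its mass per step, so for
  k \<ge> 1 a coupling of \<open>\<mu>\<^sub>k\<close> with \<open>\<nu>\<^sub>k\<close> exists iff \<alpha> = 1, independently of k.\<close>
lemma W_single_vertex: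
  assumes "simple_graph {x} E" "0 \<le> \<alpha>" "k \<ge> 1"
  shows "W {x} E x x \<alpha> 1 k = W {x} E x x \<alpha> 1 1"
proof -
  have "\<not> E a b" for a b
    using assms(1) unfolding simple_graph_def by blast
  then have "walk_step {x} E \<gamma> p = (\<lambda>t. \<gamma> * p t)" for \<gamma> p
    by (simp add: walk_step_def)
  then have walk: "walk_dist {x} E \<gamma> x j x = \<gamma> ^ j" for \<gamma> j
    by (induction j) (simp_all add: walk_dist_def)
  have "coupling {x} \<mu> \<nu> \<pi> \<longleftrightarrow> 0 \<le> \<pi> x x \<and> \<pi> x x = \<mu> x \<and> \<pi> x x = \<nu> x" for \<mu> \<nu> \<pi>
    unfolding coupling_def by simp
  moreover have "\<alpha> ^ k = 1 \<longleftrightarrow> \<alpha> = 1"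
    using power_eq_iff_eq_base[of k \<alpha> 1] assms(2,3) by simp
  then have "p = \<alpha> ^ k \<and> p = 1 \<longleftrightarrow> p = \<alpha> \<and> p = 1" for p :: real
    by auto
  ultimately show ?thesis
    unfolding W_def wasserstein_def by (simp add: walk)
qed

lemma eventually_const_parity:
  fixes a :: "nat \<Rightarrow> real"
  assumes "\<And>k. k \<ge> 1 \<Longrightarrow> a k = a 1"
  shows "eventually_const (\<lambda>k. a (2*k)) \<and> eventually_const (\<lambda>k. a (2*k+1))"
  unfolding eventually_const_def
proof
  have "a (2*k) = a (2*1)" if "k \<ge> 1" for k
    using assms[of "2*k"] assms[of "2*1"] that by simp
  then show "\<exists>N. \<forall>k\<ge>N. a (2*k) = a (2*N)" by blast
  have "a (2*k+1) = a (2*0+1)" for k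
    using assms[of "2*k+1"] by simp
  then show "\<exists>N. \<forall>k\<ge>N. a (2*k+1) = a (2*N+1)" by blast
qed

theorem lemma7p1:
  fixes V :: "'a set" and E :: "'a \<Rightarrow> 'a \<Rightarrow> bool" and u v :: 'a and \<alpha> \<beta> :: real
  assumes "simple_graph V E" and "connected_graph V E"
    and "u \<in> V" and "v \<in> V"
    and "0 \<le> \<alpha>" and "\<alpha> \<le> 1" and "0 \<le> \<beta>" and "\<beta> \<le> 1" and "\<alpha> \<le> \<beta>"
    and "\<beta> = 1"
  shows "(eventually_const (\<lambda>k. W V E u v \<alpha> \<beta> (2*k)) \<or>
          (\<exists>c_e l_e :: real. (\<lambda>k. \<bar>W V E u v \<alpha> \<beta> (2*k) - lim (\<lambda>k. W V E u v \<alpha> \<beta> (2*k))\<bar>)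
              \<sim>[at_top] (\<lambda>k. c_e * l_e ^ (2*k))))
       \<and> (eventually_const (\<lambda>k. W V E u v \<alpha> \<beta> (2*k+1)) \<or>
          (\<exists>c_o l_o :: real. (\<lambda>k. \<bar>W V E u v \<alpha> \<beta> (2*k+1) - lim (\<lambda>k. W V E u v \<alpha> \<beta> (2*k+1))\<bar>)
              \<sim>[at_top] (\<lambda>k. c_o * l_o ^ (2*k+1))))"
proof (cases "\<forall>x\<in>V. deg V E x > 0")
  case True
  with W_laziness_1_exp_sum[OF assms(1) True assms(3-6)] obtain M c
    where "finite M" "\<forall>\<mu>\<in>M. \<bar>\<mu>\<bar> \<le> 1" "\<And>k. W V E u v \<alpha> 1 k = (\<Sum>\<mu>\<in>M. c \<mu> * \<mu> ^ k)"
    by blast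
  then show ?thesis unfolding \<open>\<beta> = 1\<close> by (rule exp_sum_parity_asymp)
next
  case False
  then obtain x where "x \<in> V" "deg V E x = 0" by auto
  with connected_graph_isolated_vertex[OF assms(1,2)] have "V = {x}" by blast
  then have "simple_graph {x} E" "u = x" "v = x"
    using assms(1,3,4) by simp_all
  then have "W V E u v \<alpha> \<beta> k = W V E u v \<alpha> \<beta> 1" if "k \<ge> 1" for k
    using W_single_vertex[OF _ assms(5) that] \<open>V = {x}\<close> \<open>\<beta> = 1\<close> by simp
  then show ?thesis using eventually_const_parity by blast
qed

end
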